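(* Let $J\ge2$ and let the configuration $\{(\iota_1,z_1^* ),\dots,(\iota_J,z_J^* )\}$ be non-degenerate. Then $|A^*\vec\lambda^D|\simeq\lambda_{\max}^D$ for all $\vec\lambda\in(0,\infty)^J$.
   Context: $N\ge7$, $D=\frac{N-2}2$. $\iota_i\in\{\pm1\}$, $z_1^*,\dots,z_J^*\in\mathbb{R}^N$ distinct. $A^*$ is the $J\times J$ matrix $A^*_{ij}=\mathbf 1_{i\ne j}\kappa_0\kappa_\infty\frac{\iota_i\iota_j}{|z_i^*-z_j^*|^{N-2}}$ with positive constants $\kappa_0=\frac{N-2}2\frac{\int W^{\frac{N+2}{N-2}}}{\int(x\cdot\nabla W+\frac{N-2}2W)^2}$, $\kappa_\infty=(N(N-2))^{\frac{N-2}2}$, $W(x)=(1+\frac{|x|^2}{N(N-2)})^{-\frac{N-2}2}$. Non-degenerate: $A^*$ has no nonzero kernel element in $[0,\infty)^J$. $\vec\lambda^D=(\lambda_1^D,\dots,\lambda_J^D)$, $\lambda_{\max}=\max_i\lambda_i$. Implicit constants may depend on $N$, $J$ and the configuration, not on $\vec\lambda$. *)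

theory Defs
  imports "HOL-Analysis.Analysis"
begin

text \<open>Dimension N is CARD('n); points of R^N are of type real^'n.
  The J bubbles are indexed by a finite type 'j, J = CARD('j).\<close>

definition dimN :: "'n::finite itself \<Rightarrow> real" where
  "dimN _ = real CARD('n)"

definition Dexp :: "'n::finite itself \<Rightarrow> real" where
  "Dexp t = (dimN t - 2) / 2"

definition Wbubble :: "real^'n::finite \<Rightarrow> real" where
  "Wbubble x = (1 + (norm x)^2 / (dimN TYPE('n) * (dimN TYPE('n) - 2)))
                 powr (- (dimN TYPE('n) - 2) / 2)"

definition kappa0 :: "'n::finite itself \<Rightarrow> real" where
  "kappa0 t = (dimN t - 2) / 2 *
     (LINT x|lborel. (Wbubble (x::real^'n)) powr ((dimN t + 2) / (dimN t - 2)))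
     / (LINT x|lborel. ((frechet_derivative Wbubble (at (x::real^'n))) x
                         + (dimN t - 2) / 2 * Wbubble x)^2)"

definition kappa_inf :: "'n::finite itself \<Rightarrow> real" where
  "kappa_inf t = (dimN t * (dimN t - 2)) powr ((dimN t - 2) / 2)"

definition Astar :: "('j::finite \<Rightarrow> real) \<Rightarrow> ('j \<Rightarrow> real^'n::finite) \<Rightarrow> real^'j^'j" where
  "Astar iota z = (\<chi> i j. if i \<noteq> j then
       kappa0 TYPE('n) * kappa_inf TYPE('n) * iota i * iota j
         / (norm (z i - z j)) powr (dimN TYPE('n) - 2)
     else 0)"

definition nondegenerate :: "('j::finite \<Rightarrow> real) \<Rightarrow> ('j \<Rightarrow> real^'n::finite) \<Rightarrow> bool" where
  "nondegenerate iota z \<longleftrightarrow>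
     (\<forall>v::real^'j. (\<forall>i. 0 \<le> v$i) \<and> Astar iota z *v v = 0 \<longrightarrow> v = 0)"

definition lam_pow :: "real^'j::finite \<Rightarrow> real \<Rightarrow> real^'j" where
  "lam_pow lam D = (\<chi> i. (lam$i) powr D)"

definition lam_max :: "real^'j::finite \<Rightarrow> real" where
  "lam_max lam = Max (range (\<lambda>i. lam$i))"

end

theory Submission
  imports Defs
begin

text \<open>Only two features of the setting matter: by non-degeneracy the linear map A* does
  not vanish on the nonzero vectors of the closed cone [0,\<infinity>)^J, and D \<ge> 0. By
  compactness of the unit sphere in that cone, |A* v| is comparable to |v| on the cone, and
  for v = \<lambda>^D the norm |v| is comparable to its largest entry \<lambda>_max^D.\<close>

lemma linear_bounded_below_on_cone:
  fixes f :: "'a::euclidean_space \<Rightarrow> 'b::real_normed_vector"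
  assumes "linear f" "closed C" "cone C"
    and no_zero: "\<And>v. v \<in> C \<Longrightarrow> f v = 0 \<Longrightarrow> v = 0"
  obtains m where "m > 0" "\<And>v. v \<in> C \<Longrightarrow> m * norm v \<le> norm (f v)"
proof (cases "C \<subseteq> {0}")
  case True
  then show thesis by (intro that[of 1]) auto
next
  case False
  define S where "S = C \<inter> sphere 0 1"
  obtain w where "w \<in> C" "w \<noteq> 0" using False by blast
  then have "(1 / norm w) *\<^sub>R w \<in> S"
    using \<open>cone C\<close> by (simp add: S_def cone_def)
  then have "S \<noteq> {}" by blast
  have "compact S"
    unfolding S_def by (intro closed_Int_compact \<open>closed C\<close> compact_sphere)
  have "continuous_on S (\<lambda>v. norm (f v))"
    using \<open>linear f\<close> by (intro continuous_on_norm linear_continuous_on) (simp add: linear_linear)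
  from continuous_attains_inf[OF \<open>compact S\<close> \<open>S \<noteq> {}\<close> this]
  obtain a where "a \<in> S" and a_min: "\<And>u. u \<in> S \<Longrightarrow> norm (f a) \<le> norm (f u)"
    by blast
  have "0 < norm (f a)"
    using \<open>a \<in> S\<close> no_zero by (fastforce simp: S_def)
  moreover have "norm (f a) * norm v \<le> norm (f v)" if "v \<in> C" for v
  proof (cases "v = 0")
    case False
    define u where "u = (1 / norm v) *\<^sub>R v"
    have "u \<in> S"
      using \<open>cone C\<close> \<open>v \<in> C\<close> False by (simp add: S_def cone_def u_def)
    have "f v = norm v *\<^sub>R f u"
      using False \<open>linear f\<close> by (simp add: u_def linear_scale)
    then have "norm (f v) = norm v * norm (f u)" by simp
    then show ?thesis
      using a_min[OF \<open>u \<in> S\<close>] by (simp add: mult.commute mult_left_mono)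
  qed simp
  ultimately show thesis by (rule that)
qed

lemma closed_nonneg_orthant: "closed {v::real^'j. \<forall>i. 0 \<le> v$i}"
  by (intro closed_Collect_all closed_Collect_le continuous_intros)

lemma cone_nonneg_orthant: "cone {v::real^'j. \<forall>i. 0 \<le> v$i}"
  by (simp add: cone_def)

lemma lam_max_attained:
  fixes lam :: "real^'j::finite"
  obtains k where "lam_max lam = lam$k" "\<And>i. lam$i \<le> lam$k"
proof -
  have "lam_max lam \<in> range (\<lambda>i. lam$i)"
    unfolding lam_max_def by (intro Max_in) auto
  then obtain k where k: "lam_max lam = lam$k" by auto
  then have "lam$i \<le> lam$k" for i
    unfolding lam_max_def by (metis Max_ge finite UNIV_I finite_imageI image_eqI)
  with k that show thesis by blast
qed

lemma norm_bounds_by_dominant_component: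
  fixes v :: "real^'j"
  assumes "\<And>i. \<bar>v$i\<bar> \<le> v$k"
  shows "v$k \<le> norm v" "norm v \<le> real CARD('j) * v$k"
proof -
  show "v$k \<le> norm v"
    using component_le_norm_cart[of v k] by simp
  have "norm v \<le> (\<Sum>i\<in>UNIV. \<bar>v$i\<bar>)" by (rule norm_le_l1_cart)
  also have "\<dots> \<le> (\<Sum>i\<in>(UNIV::'j set). v$k)" by (intro sum_mono assms)
  finally show "norm v \<le> real CARD('j) * v$k" by simp
qed

lemma norm_lam_pow_bounds:
  fixes lam :: "real^'j::finite"
  assumes "\<And>i. 0 < lam$i" "0 \<le> D"
  shows "lam_max lam powr D \<le> norm (lam_pow lam D)"
    and "norm (lam_pow lam D) \<le> real CARD('j) * lam_max lam powr D"
proof -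
  obtain k where k: "lam_max lam = lam$k" "\<And>i. lam$i \<le> lam$k"
    using lam_max_attained[of lam] by blast
  have "\<bar>lam_pow lam D $ i\<bar> \<le> lam_pow lam D $ k" for i
    using assms k(2)[of i] by (simp add: lam_pow_def powr_mono2 less_imp_le)
  from norm_bounds_by_dominant_component[OF this]
  show "lam_max lam powr D \<le> norm (lam_pow lam D)"
    and "norm (lam_pow lam D) \<le> real CARD('j) * lam_max lam powr D"
    by (simp_all add: k(1) lam_pow_def)
qed

theorem lemma4p1:
  fixes iota :: "'j::finite \<Rightarrow> real" and z :: "'j \<Rightarrow> real^'n::finite"
  assumes "CARD('n) \<ge> 7"
    and "CARD('j) \<ge> 2"
    and "\<forall>i. iota i \<in> {-1, 1}"
    and "inj z"
    and "nondegenerate iota z"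
  shows "\<exists>c C. 0 < c \<and> 0 < C \<and>
    (\<forall>lam::real^'j. (\<forall>i. 0 < lam$i) \<longrightarrow>
       c * lam_max lam powr Dexp TYPE('n)
         \<le> norm (Astar iota z *v lam_pow lam (Dexp TYPE('n))) \<and>
       norm (Astar iota z *v lam_pow lam (Dexp TYPE('n)))
         \<le> C * lam_max lam powr Dexp TYPE('n))"
proof -
  define A where "A = Astar iota z"
  define D where "D = Dexp TYPE('n)"
  have "0 \<le> D" using assms(1) by (simp add: D_def Dexp_def dimN_def)
  obtain m where "m > 0" and lower: "\<And>v. \<forall>i. 0 \<le> v$i \<Longrightarrow> m * norm v \<le> norm (A *v v)"
    using linear_bounded_below_on_cone[OF _ closed_nonneg_orthant cone_nonneg_orthant,
        of "(*v) A"] assms(5)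
    by (auto simp: A_def nondegenerate_def)
  obtain M where "M > 0" and upper: "\<And>v. norm (A *v v) \<le> M * norm v"
    using linear_bounded_pos[of "(*v) A"] by auto
  have "m * lam_max lam powr D \<le> norm (A *v lam_pow lam D) \<and>
        norm (A *v lam_pow lam D) \<le> (M * real CARD('j)) * lam_max lam powr D"
    if "\<forall>i. 0 < lam$i" for lam :: "real^'j"
  proof
    note norm_v = norm_lam_pow_bounds[of lam D, OF _ \<open>0 \<le> D\<close>]
    have "m * lam_max lam powr D \<le> m * norm (lam_pow lam D)"
      using norm_v(1) that \<open>m > 0\<close> by simp
    also have "\<dots> \<le> norm (A *v lam_pow lam D)"
      by (intro lower) (simp add: lam_pow_def)
    finally show "m * lam_max lam powr D \<le> norm (A *v lam_pow lam D)" .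
    have "norm (A *v lam_pow lam D) \<le> M * norm (lam_pow lam D)"
      by (rule upper)
    also have "\<dots> \<le> M * (real CARD('j) * lam_max lam powr D)"
      using norm_v(2) that \<open>M > 0\<close> by simp
    finally show "norm (A *v lam_pow lam D) \<le> (M * real CARD('j)) * lam_max lam powr D"
      by (simp add: mult.assoc)
  qed
  then show ?thesis
    using \<open>m > 0\<close> \<open>M > 0\<close> unfolding A_def D_def
    by (intro exI[of _ m] exI[of _ "M * real CARD('j)"]) auto
qed

end
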